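(* Let $A$ be an MV-algebra and $d$ a $(\odot,\vee)$-derivation on $A$. The following are equivalent: (1) $d$ is isotone and $d(1)\in\mathbf{B}(A)$; (2) $d(x\oplus y)=d(x)\oplus d(y)$ for all $x,y\in A$; (3) $d(x\odot y)=d(x)\odot d(y)$ for all $x,y\in A$.
   Context: An MV-algebra is an algebra $(A,\oplus,{}^*,0)$ of type $(2,1,0)$ satisfying: $x\oplus(y\oplus z)=(x\oplus y)\oplus z$, $x\oplus y=y\oplus x$, $x\oplus 0=x$, $x^{**}=x$, $x\oplus 0^*=0^*$, $(x^*\oplus y)^*\oplus y=(y^*\oplus x)^*\oplus x$. Put $1=0^*$ and $x\odot y=(x^*\oplus y^* )^*$. The natural order is $x\le y$ iff $x^*\oplus y=1$, with lattice operations $x\vee y=(x\odot y^* )\oplus y$, $x\wedge y=x\odot(x^*\oplus y)$. The Boolean center is $\mathbf{B}(A)=\{x\in A: x\oplus x=x\}$. A $(\odot,\vee)$-derivation on $A$ is a map $d:A\to A$ with $d(x\odot y)=(d(x)\odot y)\vee(x\odot d(y))$ for all $x,y\in A$; it is isotone if $x\le y$ implies $d(x)\le d(y)$. *)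

theory Defs
  imports Main
begin

locale mv_algebra =
  fixes oplus :: "'a \<Rightarrow> 'a \<Rightarrow> 'a" (infixl "\<oplus>" 65)
    and neg :: "'a \<Rightarrow> 'a"
    and zero :: 'a
  assumes assoc: "x \<oplus> (y \<oplus> z) = (x \<oplus> y) \<oplus> z"
    and comm: "x \<oplus> y = y \<oplus> x"
    and zero_neutral: "x \<oplus> zero = x"
    and neg_neg: "neg (neg x) = x"
    and one_absorb: "x \<oplus> neg zero = neg zero"
    and lukasiewicz: "neg (neg x \<oplus> y) \<oplus> y = neg (neg y \<oplus> x) \<oplus> x"

definition mv_one :: "('a \<Rightarrow> 'a) \<Rightarrow> 'a \<Rightarrow> 'a" where
  "mv_one neg zero = neg zero"

definition mv_odot :: "('a \<Rightarrow> 'a \<Rightarrow> 'a) \<Rightarrow> ('a \<Rightarrow> 'a) \<Rightarrow> 'a \<Rightarrow> 'a \<Rightarrow> 'a" where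
  "mv_odot oplus neg x y = neg (oplus (neg x) (neg y))"

definition mv_le :: "('a \<Rightarrow> 'a \<Rightarrow> 'a) \<Rightarrow> ('a \<Rightarrow> 'a) \<Rightarrow> 'a \<Rightarrow> 'a \<Rightarrow> 'a \<Rightarrow> bool" where
  "mv_le oplus neg zero x y \<longleftrightarrow> oplus (neg x) y = neg zero"

definition mv_sup :: "('a \<Rightarrow> 'a \<Rightarrow> 'a) \<Rightarrow> ('a \<Rightarrow> 'a) \<Rightarrow> 'a \<Rightarrow> 'a \<Rightarrow> 'a" where
  "mv_sup oplus neg x y = oplus (mv_odot oplus neg x (neg y)) y"

definition mv_inf :: "('a \<Rightarrow> 'a \<Rightarrow> 'a) \<Rightarrow> ('a \<Rightarrow> 'a) \<Rightarrow> 'a \<Rightarrow> 'a \<Rightarrow> 'a" where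
  "mv_inf oplus neg x y = mv_odot oplus neg x (oplus (neg x) y)"

definition boolean_center :: "('a \<Rightarrow> 'a \<Rightarrow> 'a) \<Rightarrow> 'a set" where
  "boolean_center oplus = {x. oplus x x = x}"

definition odot_sup_derivation :: "('a \<Rightarrow> 'a \<Rightarrow> 'a) \<Rightarrow> ('a \<Rightarrow> 'a) \<Rightarrow> ('a \<Rightarrow> 'a) \<Rightarrow> bool" where
  "odot_sup_derivation oplus neg d \<longleftrightarrow>
     (\<forall>x y. d (mv_odot oplus neg x y) =
        mv_sup oplus neg (mv_odot oplus neg (d x) y) (mv_odot oplus neg x (d y)))"

definition mv_isotone :: "('a \<Rightarrow> 'a \<Rightarrow> 'a) \<Rightarrow> ('a \<Rightarrow> 'a) \<Rightarrow> 'a \<Rightarrow> ('a \<Rightarrow> 'a) \<Rightarrow> bool" where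
  "mv_isotone oplus neg zero d \<longleftrightarrow>
     (\<forall>x y. mv_le oplus neg zero x y \<longrightarrow> mv_le oplus neg zero (d x) (d y))"

end

theory Submission
  imports Defs
begin

text \<open>Every \<open>(\<odot>,\<or>)\<close>-derivation satisfies \<open>x \<odot> d(1) \<le> d(x) \<le> x\<close>. If \<open>d\<close> is isotone and
  \<open>a = d(1)\<close> is Boolean, then \<open>d(x) \<le> d(1)\<close> gives \<open>d(x) = d(x) \<odot> a \<le> x \<odot> a\<close>, so \<open>d\<close> is
  multiplication by the Boolean element \<open>a\<close>; this map preserves \<open>\<odot>\<close> because \<open>a \<odot> a = a\<close>, and
  preserves \<open>\<oplus>\<close> because multiplication by a Boolean element distributes over \<open>\<oplus>\<close>.
  Conversely, a map preserving \<open>\<oplus>\<close> or \<open>\<odot>\<close> is isotone and sends the idempotent \<open>1\<close> to an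
  idempotent, and \<open>\<odot>\<close>-idempotents are exactly the Boolean elements.\<close>

context mv_algebra
begin

abbreviation one :: 'a where "one \<equiv> neg zero"

abbreviation odot :: "'a \<Rightarrow> 'a \<Rightarrow> 'a" (infixl "\<odot>" 70) where
  "x \<odot> y \<equiv> neg (neg x \<oplus> neg y)"

abbreviation leq :: "'a \<Rightarrow> 'a \<Rightarrow> bool" (infix "\<preceq>" 50) where
  "x \<preceq> y \<equiv> mv_le (\<oplus>) neg zero x y"

abbreviation join :: "'a \<Rightarrow> 'a \<Rightarrow> 'a" where
  "join x y \<equiv> neg (neg x \<oplus> y) \<oplus> y"

lemma add_left_commute: "x \<oplus> (y \<oplus> z) = y \<oplus> (x \<oplus> z)"
  by (simp only: assoc comm[of x y])

lemma zero_add: "zero \<oplus> x = x"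
  by (simp only: comm[of zero x] zero_neutral)

lemma one_add: "one \<oplus> x = one"
  by (simp only: comm[of one x] one_absorb)

lemma le_def: "x \<preceq> y \<longleftrightarrow> neg x \<oplus> y = one"
  by (simp add: mv_le_def)

lemma le_refl: "x \<preceq> x"
  using lukasiewicz[of x one] by (simp add: le_def one_absorb neg_neg zero_add)

lemma join_eq_right: "x \<preceq> y \<Longrightarrow> join x y = y"
  by (simp add: le_def neg_neg zero_add)

lemma le_antisym: "x \<preceq> y \<Longrightarrow> y \<preceq> x \<Longrightarrow> x = y"
  using lukasiewicz[of x y] by (simp only: join_eq_right)

lemma le_iff_add: "x \<preceq> y \<longleftrightarrow> (\<exists>p. y = x \<oplus> p)"
proof
  assume "x \<preceq> y"
  then have "y = join y x"
    using lukasiewicz[of x y] by (simp only: join_eq_right)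
  then show "\<exists>p. y = x \<oplus> p"
    by (subst (asm) comm) blast
next
  assume "\<exists>p. y = x \<oplus> p"
  then obtain p where "y = x \<oplus> p" ..
  then show "x \<preceq> y"
    using le_refl by (simp add: le_def assoc one_add)
qed

lemma le_add: "x \<preceq> x \<oplus> y"
  using le_iff_add by blast

lemma le_trans [trans]: "x \<preceq> y \<Longrightarrow> y \<preceq> z \<Longrightarrow> x \<preceq> z"
  unfolding le_iff_add by (auto simp only: assoc[symmetric])

lemma add_right_mono: "x \<preceq> y \<Longrightarrow> x \<oplus> z \<preceq> y \<oplus> z"
  unfolding le_iff_add by (auto simp only: assoc[symmetric] add_left_commute comm[of _ z])

lemma add_left_mono: "x \<preceq> y \<Longrightarrow> z \<oplus> x \<preceq> z \<oplus> y"
  unfolding le_iff_add by (auto simp only: assoc)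

lemma add_mono: "x \<preceq> x' \<Longrightarrow> y \<preceq> y' \<Longrightarrow> x \<oplus> y \<preceq> x' \<oplus> y'"
  using add_right_mono add_left_mono le_trans by blast

lemma le_one: "x \<preceq> one"
  by (simp add: le_def one_absorb)

lemma zero_le: "zero \<preceq> x"
  by (simp add: le_def one_add)

lemma neg_le_neg: "x \<preceq> y \<Longrightarrow> neg y \<preceq> neg x"
  by (simp add: le_def neg_neg comm)

lemma odot_right_mono: "x \<preceq> y \<Longrightarrow> x \<odot> z \<preceq> y \<odot> z"
  by (intro neg_le_neg add_right_mono)

lemma odot_commute: "x \<odot> y = y \<odot> x"
  by (simp add: comm)

lemma odot_assoc: "x \<odot> (y \<odot> z) = (x \<odot> y) \<odot> z"
  by (simp add: neg_neg assoc)

lemma odot_le: "x \<odot> y \<preceq> x"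
proof -
  have "(neg x \<oplus> neg y) \<oplus> x = neg y \<oplus> (neg x \<oplus> x)"
    by (simp only: assoc[symmetric] add_left_commute comm)
  then show ?thesis
    using le_refl[of x] by (simp add: le_def neg_neg one_absorb)
qed

lemma odot_one: "x \<odot> one = x"
  by (simp add: neg_neg zero_neutral)

lemma odot_zero: "x \<odot> zero = zero"
  by (simp add: one_absorb neg_neg)

lemma odot_neg_self: "x \<odot> neg x = zero"
  using le_refl[of x] comm[of "neg x" x] by (simp add: le_def neg_neg)

lemma le_zero_iff: "x \<preceq> zero \<longleftrightarrow> x = zero"
  using le_antisym le_refl zero_le by blast

lemma join_upper2: "y \<preceq> join x y"
  using le_add[of y "neg (neg x \<oplus> y)"] by (simp only: comm[of y])

lemma join_upper1: "x \<preceq> join x y"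
  using join_upper2[where x = y and y = x] by (simp only: lukasiewicz[of x y])

lemma neg_eq_iff_eq_neg: "neg x = y \<longleftrightarrow> x = neg y"
  by (auto simp: neg_neg)

lemma le_iff_odot_neg: "x \<preceq> y \<longleftrightarrow> x \<odot> neg y = zero"
  by (simp add: le_def neg_neg neg_eq_iff_eq_neg)

lemma meet_commute: "x \<odot> (neg x \<oplus> y) = y \<odot> (neg y \<oplus> x)"
  using lukasiewicz[of "neg x" "neg y"] by (simp add: neg_neg comm)

lemma odot_add_le: "u \<odot> (v \<oplus> w) \<preceq> (u \<odot> v) \<oplus> w"
proof -
  have "neg v \<preceq> neg (v \<oplus> w) \<oplus> w"
    using join_upper1[of "neg v" w] by (simp only: neg_neg)
  then have "(neg u \<oplus> neg v) \<oplus> (u \<odot> v) \<preceq> (neg u \<oplus> (neg (v \<oplus> w) \<oplus> w)) \<oplus> (u \<odot> v)"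
    by (intro add_right_mono add_left_mono)
  moreover have "(neg u \<oplus> neg v) \<oplus> (u \<odot> v) = one"
    using le_refl[of "neg u \<oplus> neg v"] by (simp only: le_def neg_neg comm)
  ultimately have "one \<preceq> (neg u \<oplus> (neg (v \<oplus> w) \<oplus> w)) \<oplus> (u \<odot> v)"
    by simp
  then have "(neg u \<oplus> (neg (v \<oplus> w) \<oplus> w)) \<oplus> (u \<odot> v) = one"
    using le_one le_antisym by blast
  then show ?thesis
    by (simp only: le_def neg_neg assoc[symmetric] comm add_left_commute)
qed

lemma boolean_odot_idem:
  assumes "a \<oplus> a = a"
  shows "a \<odot> a = a"
proof -
  have "a \<odot> (neg a \<oplus> neg a) = neg a \<odot> (a \<oplus> a)"
    using meet_commute[of a "neg a"] by (simp add: neg_neg)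
  also have "\<dots> = zero"
    using assms odot_neg_self[of "neg a"] by (simp add: neg_neg)
  finally have "a \<preceq> a \<odot> a"
    by (simp only: le_iff_odot_neg neg_neg)
  then show ?thesis
    using odot_le le_antisym by blast
qed

lemma odot_idem_boolean:
  assumes "a \<odot> a = a"
  shows "a \<oplus> a = a"
proof -
  have "neg a \<oplus> neg a = neg a"
    using arg_cong[OF assms, of neg] by (simp only: neg_neg)
  then have "neg (a \<oplus> a) = neg a"
    using boolean_odot_idem[of "neg a"] by (simp only: neg_neg)
  then show ?thesis
    by (simp add: neg_eq_iff_eq_neg neg_neg)
qed

lemma boolean_odot_eq_left:
  assumes "a \<oplus> a = a" and "z \<preceq> a"
  shows "z \<odot> a = z"
proof -
  have meet: "a \<odot> (neg a \<oplus> z) = z"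
    using meet_commute[of z a] assms(2) odot_one[of z] by (simp add: le_def)
  have "z \<odot> a = a \<odot> (a \<odot> (neg a \<oplus> z))"
    by (simp only: meet odot_commute)
  also have "\<dots> = (a \<odot> a) \<odot> (neg a \<oplus> z)"
    by (rule odot_assoc)
  also have "\<dots> = z"
    by (simp only: boolean_odot_idem[OF assms(1)] meet)
  finally show ?thesis .
qed

lemma boolean_odot_add_distrib:
  assumes boolean: "a \<oplus> a = a"
  shows "(x \<oplus> y) \<odot> a = (x \<odot> a) \<oplus> (y \<odot> a)"
proof (rule le_antisym)
  have "(x \<oplus> y) \<odot> a = ((x \<oplus> y) \<odot> a) \<odot> a"
    by (simp only: odot_assoc[symmetric] boolean_odot_idem[OF boolean])
  also have "\<dots> \<preceq> ((x \<odot> a) \<oplus> y) \<odot> a"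
    using odot_add_le[of a x y] by (intro odot_right_mono) (simp only: odot_commute)
  also have "\<dots> = a \<odot> (y \<oplus> (x \<odot> a))"
    by (simp only: odot_commute comm)
  also have "\<dots> \<preceq> (a \<odot> y) \<oplus> (x \<odot> a)"
    by (rule odot_add_le)
  also have "\<dots> = (x \<odot> a) \<oplus> (y \<odot> a)"
    by (simp only: odot_commute comm)
  finally show "(x \<oplus> y) \<odot> a \<preceq> (x \<odot> a) \<oplus> (y \<odot> a)" .
next
  let ?z = "(x \<odot> a) \<oplus> (y \<odot> a)"
  have "?z \<preceq> a \<oplus> a"
    using odot_le[of a x] odot_le[of a y] by (intro add_mono) (simp_all only: odot_commute)
  then have "?z = ?z \<odot> a"
    using boolean boolean_odot_eq_left by simp
  also have "\<dots> \<preceq> (x \<oplus> y) \<odot> a"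
    by (intro odot_right_mono add_mono odot_le)
  finally show "?z \<preceq> (x \<oplus> y) \<odot> a" .
qed

lemma boolean_odot_odot_distrib:
  assumes "a \<oplus> a = a"
  shows "(x \<odot> y) \<odot> a = (x \<odot> a) \<odot> (y \<odot> a)"
proof -
  have "(x \<odot> a) \<odot> (y \<odot> a) = (x \<odot> y) \<odot> (a \<odot> a)"
    by (simp only: neg_neg assoc[symmetric] comm add_left_commute)
  then show ?thesis
    by (simp only: boolean_odot_idem[OF assms])
qed

lemma add_hom_isotone:
  assumes "\<And>x y. f (x \<oplus> y) = f x \<oplus> f y" and "x \<preceq> y"
  shows "f x \<preceq> f y"
proof -
  obtain p where "y = x \<oplus> p"
    using assms(2) le_iff_add by blast
  then have "f y = f x \<oplus> f p"
    by (simp only: assms(1))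
  then show ?thesis
    by (simp only: le_add)
qed

lemma odot_hom_isotone:
  assumes "\<And>x y. f (x \<odot> y) = f x \<odot> f y" and "x \<preceq> y"
  shows "f x \<preceq> f y"
proof -
  have "x = y \<odot> (neg y \<oplus> x)"
    using meet_commute[of x y] assms(2) odot_one[of x] by (simp add: le_def)
  then have "f x = f (y \<odot> (neg y \<oplus> x))"
    by (rule arg_cong)
  also have "\<dots> = f y \<odot> f (neg y \<oplus> x)"
    by (rule assms(1))
  finally show ?thesis
    by (simp only: odot_le)
qed

lemma mv_sup_eq_join: "mv_sup (\<oplus>) neg x y = join x y"
  by (simp add: mv_sup_def mv_odot_def neg_neg)

end

locale mv_derivation = mv_algebra +
  fixes d :: "'a \<Rightarrow> 'a"
  assumes derivation: "odot_sup_derivation (\<oplus>) neg d"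
begin

lemma derivation_odot: "d (x \<odot> y) = join (d x \<odot> y) (x \<odot> d y)"
  using derivation unfolding odot_sup_derivation_def mv_sup_eq_join by (simp add: mv_odot_def)

lemma derivation_zero: "d zero = zero"
  using derivation_odot[of zero zero]
  by (simp add: odot_commute odot_zero neg_neg zero_neutral one_add)

lemma derivation_le: "d x \<preceq> x"
proof -
  have "join (d x \<odot> neg x) (x \<odot> d (neg x)) = zero"
    using derivation_odot[of x "neg x"] odot_neg_self derivation_zero by simp
  then have "d x \<odot> neg x = zero"
    using join_upper1[of "d x \<odot> neg x" "x \<odot> d (neg x)"] by (simp add: le_zero_iff)
  then show ?thesis
    using le_iff_odot_neg by blast
qed

lemma odot_derivation_one_le: "x \<odot> d one \<preceq> d x"
proof -
  have "join (d x) (x \<odot> d one) = d x"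
    using derivation_odot[of x one] unfolding odot_one by (rule sym)
  then show ?thesis
    using join_upper2[where x = "d x" and y = "x \<odot> d one"] by simp
qed

lemma isotone_boolean_eq_odot_one:
  assumes "mv_isotone (\<oplus>) neg zero d" and "d one \<in> boolean_center (\<oplus>)"
  shows "d x = x \<odot> d one"
proof (rule le_antisym)
  have "d x \<preceq> d one"
    using assms(1) le_one unfolding mv_isotone_def by blast
  then have "d x = d x \<odot> d one"
    using assms(2) boolean_odot_eq_left unfolding boolean_center_def by simp
  also have "\<dots> \<preceq> x \<odot> d one"
    by (rule odot_right_mono[OF derivation_le])
  finally show "d x \<preceq> x \<odot> d one" .
qed (rule odot_derivation_one_le)

lemma isotone_boolean_iff_add_hom:
  "mv_isotone (\<oplus>) neg zero d \<and> d one \<in> boolean_center (\<oplus>) \<longleftrightarrow>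
     (\<forall>x y. d (x \<oplus> y) = d x \<oplus> d y)"
proof
  assume isotone_boolean: "mv_isotone (\<oplus>) neg zero d \<and> d one \<in> boolean_center (\<oplus>)"
  then have boolean: "d one \<oplus> d one = d one"
    by (simp add: boolean_center_def)
  have d_eq: "\<And>x. d x = x \<odot> d one"
    using isotone_boolean by (blast intro: isotone_boolean_eq_odot_one)
  show "\<forall>x y. d (x \<oplus> y) = d x \<oplus> d y"
  proof (intro allI)
    fix x y
    have "d (x \<oplus> y) = (x \<oplus> y) \<odot> d one"
      by (rule d_eq)
    also have "\<dots> = (x \<odot> d one) \<oplus> (y \<odot> d one)"
      by (rule boolean_odot_add_distrib[OF boolean])
    finally show "d (x \<oplus> y) = d x \<oplus> d y"
      by (simp only: d_eq[symmetric])
  qed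
next
  assume hom: "\<forall>x y. d (x \<oplus> y) = d x \<oplus> d y"
  have "d one \<oplus> d one = d one"
    using hom[rule_format, of one one] by (simp only: one_absorb)
  moreover have "mv_isotone (\<oplus>) neg zero d"
    unfolding mv_isotone_def using add_hom_isotone[of d, OF hom[rule_format]] by blast
  ultimately show "mv_isotone (\<oplus>) neg zero d \<and> d one \<in> boolean_center (\<oplus>)"
    by (simp add: boolean_center_def)
qed

lemma isotone_boolean_iff_odot_hom:
  "mv_isotone (\<oplus>) neg zero d \<and> d one \<in> boolean_center (\<oplus>) \<longleftrightarrow>
     (\<forall>x y. d (x \<odot> y) = d x \<odot> d y)"
proof
  assume isotone_boolean: "mv_isotone (\<oplus>) neg zero d \<and> d one \<in> boolean_center (\<oplus>)"
  then have boolean: "d one \<oplus> d one = d one"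
    by (simp add: boolean_center_def)
  have d_eq: "\<And>x. d x = x \<odot> d one"
    using isotone_boolean by (blast intro: isotone_boolean_eq_odot_one)
  show "\<forall>x y. d (x \<odot> y) = d x \<odot> d y"
  proof (intro allI)
    fix x y
    have "d (x \<odot> y) = (x \<odot> y) \<odot> d one"
      by (rule d_eq)
    also have "\<dots> = (x \<odot> d one) \<odot> (y \<odot> d one)"
      by (rule boolean_odot_odot_distrib[OF boolean])
    finally show "d (x \<odot> y) = d x \<odot> d y"
      by (simp only: d_eq[symmetric])
  qed
next
  assume hom: "\<forall>x y. d (x \<odot> y) = d x \<odot> d y"
  have "d one \<odot> d one = d one"
    using hom[rule_format, of one one] by (simp only: odot_one)
  then have "d one \<oplus> d one = d one"
    by (rule odot_idem_boolean)
  moreover have "mv_isotone (\<oplus>) neg zero d"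
    unfolding mv_isotone_def using odot_hom_isotone[of d, OF hom[rule_format]] by blast
  ultimately show "mv_isotone (\<oplus>) neg zero d \<and> d one \<in> boolean_center (\<oplus>)"
    by (simp add: boolean_center_def)
qed

end

theorem proposition3p22:
  fixes oplus :: "'a \<Rightarrow> 'a \<Rightarrow> 'a" and neg :: "'a \<Rightarrow> 'a" and zero :: 'a
    and d :: "'a \<Rightarrow> 'a"
  assumes "mv_algebra oplus neg zero"
    and "odot_sup_derivation oplus neg d"
  shows "((mv_isotone oplus neg zero d \<and> d (mv_one neg zero) \<in> boolean_center oplus)
            \<longleftrightarrow> (\<forall>x y. d (oplus x y) = oplus (d x) (d y)))
       \<and> ((\<forall>x y. d (oplus x y) = oplus (d x) (d y))
            \<longleftrightarrow> (\<forall>x y. d (mv_odot oplus neg x y) = mv_odot oplus neg (d x) (d y)))"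
proof -
  interpret mv_derivation oplus neg zero d
    by (intro mv_derivation.intro mv_derivation_axioms.intro assms)
  show ?thesis
    unfolding mv_one_def mv_odot_def
    using isotone_boolean_iff_add_hom isotone_boolean_iff_odot_hom by blast
qed

end
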